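(* Let $\mathfrak g$ be a finite-dimensional complex Lie algebra, $U\subset\mathfrak g^*\times\mathfrak g^*$ open, and $\lambda_1,\lambda_2:U\to\mathbb C$ locally analytic functions such that for every $(x,a)\in U$, $\lambda_1(x,a)$ and $\lambda_2(x,a)$ are distinct eigenvalues of the pencil $\mathcal A_x+\mu\mathcal A_a$. Then for $(x_0,a_0)$ in an open dense subset of $U$, $\frac{\partial\lambda_1}{\partial x}(x_0,a_0)\wedge\frac{\partial\lambda_2}{\partial x}(x_0,a_0)\neq0$.
   Context: For $x\in\mathfrak g^*$, $\mathcal A_x$ is the skew form $(\xi,\eta)\mapsto\langle x,[\xi,\eta]\rangle$ on $\mathfrak g$. A number $\lambda_0$ is an eigenvalue of the pencil $\mathcal A_x+\mu\mathcal A_a$ if $\operatorname{rk}(\mathcal A_x-\lambda_0\mathcal A_a)<\max_\mu\operatorname{rk}(\mathcal A_x+\mu\mathcal A_a)$. $\frac{\partial\lambda}{\partial x}$ denotes the differential with respect to $x\in\mathfrak g^*$ (an element of $\mathfrak g$). *)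

theory Defs
  imports "HOL-Analysis.Analysis"
begin

text \<open>The Lie algebra g is modelled as complex^'n (a basis is fixed, the index type 'n is
finite), its dual g* is identified with complex^'n via the dual basis, so the pairing is
the coordinate pairing below.\<close>

definition pairing :: "complex^'n \<Rightarrow> complex^'n \<Rightarrow> complex" where
  "pairing x \<xi> = (\<Sum>i\<in>UNIV. x$i * \<xi>$i)"

definition lie_algebra :: "(complex^'n \<Rightarrow> complex^'n \<Rightarrow> complex^'n) \<Rightarrow> bool" where
  "lie_algebra br \<longleftrightarrow>
     (\<forall>x y z. br (x + y) z = br x z + br y z) \<and>
     (\<forall>x y z. br x (y + z) = br x y + br x z) \<and>
     (\<forall>c x y. br (c *s x) y = c *s br x y) \<and>
     (\<forall>c x y. br x (c *s y) = c *s br x y) \<and>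
     (\<forall>x. br x x = 0) \<and>
     (\<forall>x y z. br x (br y z) + br y (br z x) + br z (br x y) = 0)"

text \<open>Gram matrix of the skew form A_x(xi,eta) = <x,[xi,eta]> in the fixed basis.\<close>
definition form_matrix :: "(complex^'n \<Rightarrow> complex^'n \<Rightarrow> complex^'n) \<Rightarrow> complex^'n \<Rightarrow> complex^'n^'n" where
  "form_matrix br x = (\<chi> j k. pairing x (br (axis j 1) (axis k 1)))"

definition pencil :: "(complex^'n \<Rightarrow> complex^'n \<Rightarrow> complex^'n) \<Rightarrow> complex^'n \<Rightarrow> complex^'n \<Rightarrow> complex \<Rightarrow> complex^'n^'n" where
  "pencil br x a \<mu> = (\<chi> j k. form_matrix br x $ j $ k + \<mu> * form_matrix br a $ j $ k)"

definition pencil_eigenvalue :: "(complex^'n \<Rightarrow> complex^'n \<Rightarrow> complex^'n) \<Rightarrow> complex^'n \<Rightarrow> complex^'n \<Rightarrow> complex \<Rightarrow> bool" where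
  "pencil_eigenvalue br x a l0 \<longleftrightarrow>
     rank (pencil br x a (- l0)) < Max (range (\<lambda>\<mu>. rank (pencil br x a \<mu>)))"

text \<open>Local analyticity of a function of (x,a) in g* x g*: near each point of U it is the sum
of a (unconditionally, hence absolutely) convergent power series in all 2n coordinates.\<close>
definition locally_analytic_on :: "((complex^'n) \<times> (complex^'n) \<Rightarrow> complex) \<Rightarrow> ((complex^'n) \<times> (complex^'n)) set \<Rightarrow> bool" where
  "locally_analytic_on f U \<longleftrightarrow>
     (\<forall>p\<in>U. \<exists>r>0. \<exists>c :: ('n \<Rightarrow> nat) \<times> ('n \<Rightarrow> nat) \<Rightarrow> complex.
        \<forall>q\<in>ball p r.
          ((\<lambda>(\<alpha>, \<beta>). c (\<alpha>, \<beta>) * (\<Prod>i\<in>UNIV. (fst q $ i - fst p $ i) ^ \<alpha> i)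
                                  * (\<Prod>i\<in>UNIV. (snd q $ i - snd p $ i) ^ \<beta> i)) has_sum f q) UNIV)"

text \<open>Differential with respect to x (an element of g, in coordinates: the partial derivatives).\<close>
definition dx :: "((complex^'n) \<times> (complex^'n) \<Rightarrow> complex) \<Rightarrow> complex^'n \<Rightarrow> complex^'n \<Rightarrow> complex^'n" where
  "dx f x a = (\<chi> i. deriv (\<lambda>t. f (x + t *s axis i 1, a)) 0)"

text \<open>Coordinates of u \<and> v in the basis e_i \<and> e_j (i,j arbitrary; vanishing iff all i<j vanish).\<close>
definition wedge2 :: "complex^'n \<Rightarrow> complex^'n \<Rightarrow> complex^('n \<times> 'n)" where
  "wedge2 u v = (\<chi> p. u$(fst p) * v$(snd p) - u$(snd p) * v$(fst p))"

end

theory Submission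
  imports Defs "HOL-Computational_Algebra.Polynomial"
begin

text \<open>
  For fixed (x, a) the pencil eigenvalues form a finite set: the rank of an affine matrix pencil
  C + \<mu> D falls below its maximum only at roots of a nonzero polynomial, namely the determinant of
  a maximal set of independent rows completed to an invertible matrix. The eigenvalues at
  (s x + t a, a) are exactly s \<lambda> + t for the eigenvalues \<lambda> at (x, a). A continuous branch
  \<lambda> therefore satisfies \<lambda>(x + t (\<alpha> x + \<beta> a), a) = (1 + t \<alpha>) \<lambda>(x, a) + t \<beta> near t = 0,
  so its x-differential d\<lambda> satisfies <a, d\<lambda>> = 1 and <x, d\<lambda>> = \<lambda>(x, a). If
  d\<lambda>1 \<and> d\<lambda>2 = 0 then <x, d\<lambda>1> <a, d\<lambda>2> = <a, d\<lambda>1> <x, d\<lambda>2>, i.e.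
  \<lambda>1 = \<lambda>2. So the wedge product vanishes nowhere on U and V = U works.
\<close>

lemma det_affine_is_poly:
  fixes C D :: "'a::comm_ring_1^'n^'n"
  shows "\<exists>p. \<forall>\<mu>. poly p \<mu> = det (\<chi> i j. C$i$j + \<mu> * D$i$j)"
proof
  let ?p = "\<Sum>\<pi>\<in>{\<pi>. \<pi> permutes (UNIV::'n set)}.
              smult (of_int (sign \<pi>)) (\<Prod>i\<in>UNIV. [:C$i$(\<pi> i), D$i$(\<pi> i):])"
  show "\<forall>\<mu>. poly ?p \<mu> = det (\<chi> i j. C$i$j + \<mu> * D$i$j)"
    by (simp add: det_def poly_sum poly_prod)
qed

lemma rank_le_card:
  fixes A :: "'a::field^'n^'m"
  shows "rank A \<le> CARD('n)"
  unfolding row_rank_def_gen using dim_subset_UNIV_cart_gen[of "rows A"] by simp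

lemma rank_scale:
  fixes M :: "'a::field^'n^'m"
  assumes "s \<noteq> 0"
  shows "rank (\<chi> j k. s * M$j$k) = rank M"
proof -
  have "rows (\<chi> j k. s * M$j$k) = (\<lambda>v. s *s v) ` rows M"
    by (auto simp: rows_def row_def vec_eq_iff image_iff)
  moreover have "finite (rows M)"
    by (simp add: rows_def full_SetCompr_eq)
  ultimately have "vec.span (rows (\<chi> j k. s * M$j$k)) = vec.span (rows M)"
    using vec.span_image_scale[of "rows M" "\<lambda>_. s"] assms by simp
  then show ?thesis
    unfolding row_rank_def_gen by (rule vec.span_eq_dim)
qed

lemma card_le_rank_if_independent_rows:
  fixes A :: "'a::field^'n^'m"
  assumes "vec.independent ((\<lambda>i. row i A) ` I)" "inj_on (\<lambda>i. row i A) I"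
  shows "card I \<le> rank A"
proof -
  have "card ((\<lambda>i. row i A) ` I) \<le> vec.dim (rows A)"
    by (rule vec.independent_card_le_dim[OF _ assms(1)]) (auto simp: rows_def)
  then show ?thesis
    using card_image[OF assms(2)] unfolding row_rank_def_gen by simp
qed

lemma card_le_rank_if_det_row_completion_nonzero:
  fixes A :: "'a::field^'n^'n"
  assumes "det (\<chi> k. if k \<in> I then row k A else E k) \<noteq> 0"
  shows "card I \<le> rank A"
proof -
  let ?N = "\<chi> k. if k \<in> I then row k A else E k"
  have rows_I: "row k A = row k ?N" if "k \<in> I" for k
    using that by (simp add: row_def vec_lambda_eta)
  have "vec.independent (rows ?N)"
    using assms det_dependent_rows by blast
  moreover have "(\<lambda>k. row k ?N) ` I \<subseteq> rows ?N"
    by (auto simp: rows_def)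
  ultimately have "vec.independent ((\<lambda>k. row k A) ` I)"
    using rows_I vec.independent_mono by (simp cong: image_cong)
  moreover have "inj (\<lambda>k. row k ?N)"
  proof (rule injI, rule ccontr)
    fix i j assume "row i ?N = row j ?N" "i \<noteq> j"
    then show False using assms det_identical_rows by blast
  qed
  then have "inj_on (\<lambda>k. row k A) I"
    using rows_I inj_on_subset[of _ UNIV I] by (simp cong: inj_on_cong)
  ultimately show ?thesis by (rule card_le_rank_if_independent_rows)
qed

lemma det_nonzero_if_rows_span:
  fixes N :: "'a::field^'n^'n"
  assumes "vec.span (rows N) = UNIV"
  shows "det N \<noteq> 0"
  using assms matrix_left_invertible_span_rows_gen invertible_left_inverse invertible_det_nz
  by blast

lemma obtain_invertible_row_completion:
  fixes A :: "'a::field^'n^'n"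
  obtains I E where "card I = rank A" "det (\<chi> k. if k \<in> I then row k A else E k) \<noteq> 0"
proof -
  obtain S where S: "S \<subseteq> rows A" "vec.independent S" "card S = rank A"
    using vec.basis_exists[of "rows A"] unfolding row_rank_def_gen by metis
  obtain B where B: "S \<subseteq> B" "vec.independent B" "vec.span B = UNIV"
    by (rule vec.maximal_independent_subset_extend[OF subset_UNIV S(2)]) auto
  have fin_B: "finite B" using B(2) by (rule vec.finiteI_independent)
  have card_B: "card B = CARD('n)"
    using vec.dim_span_eq_card_independent[OF B(2)] B(3) vec_dim_card[where 'a='a and 'n='n]
    by simp
  have "S \<subseteq> (\<lambda>i. row i A) ` UNIV" using S(1) by (auto simp: rows_def)
  then obtain I where I: "inj_on (\<lambda>i. row i A) I" "S = (\<lambda>i. row i A) ` I"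
    by (auto simp: subset_image_inj)
  have card_I: "card I = rank A" using card_image[OF I(1)] I(2) S(3) by simp
  have "card (UNIV - I) = card (B - S)"
    using card_B card_I S(3) B(1) fin_B by (simp add: card_Diff_subset finite_subset)
  then obtain \<phi> where \<phi>: "bij_betw \<phi> (UNIV - I) (B - S)"
    using finite_same_card_bij[of "UNIV - I" "B - S"] fin_B by auto
  define N where "N = (\<chi> k. if k \<in> I then row k A else \<phi> k)"
  have "B \<subseteq> rows N"
  proof
    fix v assume "v \<in> B"
    then have "v \<in> (\<lambda>i. row i A) ` I \<or> v \<in> \<phi> ` (UNIV - I)"
      using I(2) \<phi> unfolding bij_betw_def by blast
    then have "\<exists>k. v = row k N"
      unfolding N_def row_def by (auto simp: vec_lambda_eta)
    then show "v \<in> rows N" by (auto simp: rows_def)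
  qed
  then have "vec.span (rows N) = UNIV"
    using B(3) vec.span_mono by blast
  then show ?thesis
    using that card_I det_nonzero_if_rows_span unfolding N_def by blast
qed

lemma finite_rank_drop_of_affine_pencil:
  fixes C D :: "'a::field^'n^'n"
  shows "finite {\<mu>. rank (\<chi> j k. C$j$k + \<mu> * D$j$k) < rank (\<chi> j k. C$j$k + \<mu>0 * D$j$k)}"
proof -
  define M where "M \<mu> = (\<chi> j k. C$j$k + \<mu> * D$j$k)" for \<mu>
  obtain I E where I: "card I = rank (M \<mu>0)"
    and E: "det (\<chi> k. if k \<in> I then row k (M \<mu>0) else E k) \<noteq> 0"
    by (rule obtain_invertible_row_completion)
  define C' :: "'a^'n^'n" where "C' = (\<chi> k. if k \<in> I then row k C else E k)"
  define D' :: "'a^'n^'n" where "D' = (\<chi> k. if k \<in> I then row k D else 0)"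
  have completion: "(\<chi> k. if k \<in> I then row k (M \<mu>) else E k) = (\<chi> i j. C'$i$j + \<mu> * D'$i$j)"
    for \<mu> by (simp add: M_def C'_def D'_def row_def vec_eq_iff)
  obtain p where p: "\<And>\<mu>. poly p \<mu> = det (\<chi> k. if k \<in> I then row k (M \<mu>) else E k)"
    using det_affine_is_poly[of C' D'] unfolding completion by blast
  have "p \<noteq> 0" using E p by (metis poly_0)
  have "{\<mu>. rank (M \<mu>) < rank (M \<mu>0)} \<subseteq> {\<mu>. poly p \<mu> = 0}"
  proof (rule subsetI, rule CollectI, rule ccontr)
    fix \<mu> assume "\<mu> \<in> {\<mu>. rank (M \<mu>) < rank (M \<mu>0)}" "poly p \<mu> \<noteq> 0"
    then show False
      using I p card_le_rank_if_det_row_completion_nonzero[of I "M \<mu>" E] by simp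
  qed
  with poly_roots_finite[OF \<open>p \<noteq> 0\<close>] show ?thesis
    unfolding M_def by (rule finite_subset[rotated])
qed

lemma form_matrix_affine:
  "form_matrix br (s *s x + t *s a) = (\<chi> j k. s * form_matrix br x $j$k + t * form_matrix br a $j$k)"
  by (simp add: form_matrix_def pairing_def vec_eq_iff algebra_simps sum.distrib sum_distrib_left)

lemma rank_pencil_affine:
  assumes "s \<noteq> 0"
  shows "rank (pencil br (s *s x + t *s a) a \<mu>) = rank (pencil br x a ((\<mu> + t) / s))"
proof -
  have "pencil br (s *s x + t *s a) a \<mu> = (\<chi> j k. s * pencil br x a ((\<mu> + t) / s) $j$k)"
    using assms by (simp add: pencil_def form_matrix_affine vec_eq_iff field_simps)
  then show ?thesis using assms by (simp add: rank_scale)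
qed

lemma pencil_eigenvalue_affine:
  assumes "s \<noteq> 0"
  shows "pencil_eigenvalue br (s *s x + t *s a) a l \<longleftrightarrow> pencil_eigenvalue br x a ((l - t) / s)"
proof -
  have "surj (\<lambda>\<mu>. (\<mu> + t) / s)"
    using assms by (intro surjI[of _ "\<lambda>\<nu>. s * \<nu> - t"]) simp
  then have "range (\<lambda>\<mu>. rank (pencil br (s *s x + t *s a) a \<mu>)) = range (\<lambda>\<mu>. rank (pencil br x a \<mu>))"
    unfolding rank_pencil_affine[OF assms] by (metis image_image)
  moreover have "(- l + t) / s = - ((l - t) / s)"
    by (metis minus_diff_eq minus_divide_left uminus_add_conv_diff)
  ultimately show ?thesis
    unfolding pencil_eigenvalue_def by (simp add: rank_pencil_affine[OF assms])
qed

lemma finite_pencil_eigenvalues: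
  fixes x a :: "complex^'n"
  shows "finite {l. pencil_eigenvalue br x a l}"
proof -
  let ?r = "\<lambda>\<mu>. rank (pencil br x a \<mu>)"
  have "range ?r \<subseteq> {..CARD('n)}" by (simp add: image_subset_iff rank_le_card)
  then have "Max (range ?r) \<in> range ?r"
    by (intro Max_in) (auto intro: finite_subset)
  then obtain \<mu>0 where \<mu>0: "Max (range ?r) = ?r \<mu>0" by blast
  have "{l. pencil_eigenvalue br x a l} \<subseteq> uminus ` {\<mu>. ?r \<mu> < ?r \<mu>0}"
    unfolding pencil_eigenvalue_def \<mu>0 by (auto intro: rev_image_eqI[of "- _"])
  moreover have "finite {\<mu>. ?r \<mu> < ?r \<mu>0}"
    using finite_rank_drop_of_affine_pencil unfolding pencil_def .
  ultimately show ?thesis by (rule finite_subset[OF _ finite_imageI])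
qed

lemma line_near_0_in_open:
  fixes x w a :: "complex^'n"
  assumes "open U" "(x, a) \<in> U"
  obtains \<rho> where "\<rho> > 0" "\<And>t. norm t < \<rho> \<Longrightarrow> (x + t *s w, a) \<in> U"
proof -
  have "continuous_on UNIV (\<lambda>t. (x + t *s w, a))"
    unfolding vector_scalar_mult_def by (intro continuous_intros)
  then have "open ((\<lambda>t. (x + t *s w, a)) -` U)"
    using assms(1) by (simp add: open_vimage)
  moreover have "0 \<in> (\<lambda>t. (x + t *s w, a)) -` U" using assms(2) by simp
  ultimately obtain \<rho> where "\<rho> > 0" "ball 0 \<rho> \<subseteq> (\<lambda>t. (x + t *s w, a)) -` U"
    using open_contains_ball by blast
  then show ?thesis by (intro that[of \<rho>]) (auto simp: subset_iff dist_norm)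
qed

text \<open>The terms of the series in \<^const>\<open>locally_analytic_on\<close> are
  c q * multi_monomial q (x - x0) (a - a0).\<close>

definition multi_degree :: "('n::finite \<Rightarrow> nat) \<times> ('n \<Rightarrow> nat) \<Rightarrow> nat" where
  "multi_degree q = sum (fst q) UNIV + sum (snd q) UNIV"

definition multi_monomial :: "('n \<Rightarrow> nat) \<times> ('n \<Rightarrow> nat) \<Rightarrow> 'a::comm_ring_1^'n \<Rightarrow> 'a^'n \<Rightarrow> 'a" where
  "multi_monomial q u v = (\<Prod>i\<in>UNIV. u$i ^ fst q i) * (\<Prod>i\<in>UNIV. v$i ^ snd q i)"

lemma finite_multi_degree_eq: "finite {q :: ('n::finite \<Rightarrow> nat) \<times> ('n \<Rightarrow> nat). multi_degree q = k}"
proof -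
  have le: "f i \<le> sum f UNIV" for f :: "'n \<Rightarrow> nat" and i by (rule member_le_sum) auto
  have "{q :: ('n \<Rightarrow> nat) \<times> ('n \<Rightarrow> nat). multi_degree q = k} \<subseteq> (UNIV \<rightarrow>\<^sub>E {..k}) \<times> (UNIV \<rightarrow>\<^sub>E {..k})"
  proof
    fix q :: "('n \<Rightarrow> nat) \<times> ('n \<Rightarrow> nat)" assume "q \<in> {q. multi_degree q = k}"
    then have "fst q i \<le> k" "snd q i \<le> k" for i
      using le[of "fst q" i] le[of "snd q" i] by (auto simp: multi_degree_def)
    then show "q \<in> (UNIV \<rightarrow>\<^sub>E {..k}) \<times> (UNIV \<rightarrow>\<^sub>E {..k})"
      by (cases q) (auto simp: PiE_UNIV_domain)
  qed
  moreover have "finite ((UNIV \<rightarrow>\<^sub>E {..k}) \<times> (UNIV \<rightarrow>\<^sub>E {..k}) :: (('n \<Rightarrow> nat) \<times> ('n \<Rightarrow> nat)) set)"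
    by (intro finite_cartesian_product finite_PiE) auto
  ultimately show ?thesis by (rule finite_subset)
qed

lemma multi_monomial_scale:
  "multi_monomial q (t *s u) (t *s v) = t ^ multi_degree q * multi_monomial q u v"
  by (simp add: multi_monomial_def multi_degree_def power_mult_distrib prod.distrib power_sum
      power_add mult_ac)

lemma prod_power_eq_sum_if_degree_one:
  fixes u :: "'i \<Rightarrow> 'a::comm_semiring_1"
  assumes "finite A" "sum \<alpha> A = 1"
  shows "(\<Prod>i\<in>A. u i ^ \<alpha> i) = (\<Sum>i\<in>A. of_nat (\<alpha> i) * u i)"
proof -
  obtain j where j: "j \<in> A" "\<alpha> j = 1" and others: "\<forall>i\<in>A - {j}. \<alpha> i = 0"
    using sum_eq_1_iff[of A \<alpha>] assms by (metis Diff_iff singletonI)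
  have "(\<Prod>i\<in>A. u i ^ \<alpha> i) = u j ^ \<alpha> j * (\<Prod>i\<in>A - {j}. u i ^ \<alpha> i)"
    by (rule prod.remove[OF assms(1) j(1)])
  also have "\<dots> = u j" using j others by simp
  also have "\<dots> = of_nat (\<alpha> j) * u j + (\<Sum>i\<in>A - {j}. of_nat (\<alpha> i) * u i)"
    using j others by simp
  also have "\<dots> = (\<Sum>i\<in>A. of_nat (\<alpha> i) * u i)"
    by (rule sum.remove[OF assms(1) j(1), symmetric])
  finally show ?thesis .
qed

lemma multi_monomial_degree_one:
  assumes "multi_degree q = 1"
  shows "multi_monomial q u v = (\<Sum>i\<in>UNIV. of_nat (fst q i) * u$i) + (\<Sum>i\<in>UNIV. of_nat (snd q i) * v$i)"
proof -
  have "sum (fst q) UNIV = 1 \<and> sum (snd q) UNIV = 0 \<or> sum (fst q) UNIV = 0 \<and> sum (snd q) UNIV = 1"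
    using assms unfolding multi_degree_def by linarith
  then show ?thesis
    unfolding multi_monomial_def by (auto simp: prod_power_eq_sum_if_degree_one)
qed

lemma has_sum_graded_imp_sums:
  fixes m :: "'q \<Rightarrow> 'a::{real_normed_field,banach}"
  assumes "\<And>k. finite {q. deg q = k}" "((\<lambda>q. t ^ deg q * m q) has_sum s) UNIV"
  shows "(\<lambda>k. (\<Sum>q | deg q = k. m q) * t ^ k) sums s"
proof -
  have "bij_betw (\<lambda>q. (deg q, q)) UNIV (SIGMA k:UNIV. {q. deg q = k})"
    by (auto simp: bij_betw_def inj_on_def image_iff)
  then have sigma: "((\<lambda>(k, q). t ^ deg q * m q) has_sum s) (SIGMA k:UNIV. {q. deg q = k})"
    using assms(2) has_sum_reindex_bij_betw[of "\<lambda>q. (deg q, q)"] by fastforce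
  have graded: "((\<lambda>q. t ^ deg q * m q) has_sum (\<Sum>q | deg q = k. m q) * t ^ k) {q. deg q = k}"
    for k
  proof (rule has_sum_finiteI[OF assms(1)])
    have "(\<Sum>q | deg q = k. t ^ deg q * m q) = (\<Sum>q | deg q = k. m q * t ^ k)"
      by (rule sum.cong) (auto simp: mult.commute)
    then show "(\<Sum>q | deg q = k. m q) * t ^ k = (\<Sum>q | deg q = k. t ^ deg q * m q)"
      by (simp add: sum_distrib_right)
  qed
  have "((\<lambda>k. (\<Sum>q | deg q = k. m q) * t ^ k) has_sum s) UNIV"
    by (rule has_sum_SigmaD[OF sigma]) (simp add: graded)
  then show ?thesis by (rule has_sum_imp_sums)
qed

lemma power_series_derivative_at_0_and_continuity:
  fixes g :: "'a::{real_normed_field,banach} \<Rightarrow> 'a"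
  assumes "\<rho> > 0" and series: "\<And>t. norm t < \<rho> \<Longrightarrow> (\<lambda>k. b k * t ^ k) sums g t"
  shows "(g has_field_derivative b 1) (at 0)" "continuous_on (ball 0 \<rho>) g"
proof -
  have g: "(\<Sum>k. b k * t ^ k) = g t" if "t \<in> ball 0 \<rho>" for t
    using series[of t] that by (simp add: sums_iff)
  have summable: "summable (\<lambda>k. b k * z ^ k)" if "norm z < \<rho>" for z
    using series[OF that] by (rule sums_summable)
  have deriv: "((\<lambda>t. \<Sum>k. b k * t ^ k) has_field_derivative (\<Sum>k. diffs b k * z ^ k)) (at z)"
    if "norm z < \<rho>" for z
    by (rule termdiffs_strong'[OF summable that])
  have "((\<lambda>t. \<Sum>k. b k * t ^ k) has_field_derivative b 1) (at 0)"
    using deriv[of 0] \<open>\<rho> > 0\<close> by (simp add: diffs_def)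
  then show "(g has_field_derivative b 1) (at 0)"
    by (rule has_field_derivative_transform_within_open[of _ _ _ "ball 0 \<rho>"])
      (use \<open>\<rho> > 0\<close> g in auto)
  have "continuous_on (ball 0 \<rho>) (\<lambda>t. \<Sum>k. b k * t ^ k)"
    by (intro continuous_at_imp_continuous_on ballI DERIV_isCont[OF deriv]) auto
  then show "continuous_on (ball 0 \<rho>) g"
    by (rule continuous_on_eq) (simp add: g)
qed

lemma locally_analytic_on_line_sums:
  fixes f :: "(complex^'n) \<times> (complex^'n) \<Rightarrow> complex"
  assumes "locally_analytic_on f U" "(x, a) \<in> U"
  obtains L where "\<And>w. \<exists>\<rho>>0. \<exists>b. (\<forall>t. norm t < \<rho> \<longrightarrow> (\<lambda>k. b k * t ^ k) sums f (x + t *s w, a))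
                                 \<and> b 1 = pairing w L"
proof -
  obtain r c where "r > 0" and raw: "\<forall>p\<in>ball (x, a) r.
      ((\<lambda>(\<alpha>, \<beta>). c (\<alpha>, \<beta>) * (\<Prod>i\<in>UNIV. (fst p $ i - x $ i) ^ \<alpha> i)
                        * (\<Prod>i\<in>UNIV. (snd p $ i - a $ i) ^ \<beta> i)) has_sum f p) UNIV"
    using bspec[OF assms(1)[unfolded locally_analytic_on_def] assms(2)]
    by (simp only: fst_conv snd_conv) blast
  have series: "((\<lambda>q. c q * multi_monomial q (fst p - x) (snd p - a)) has_sum f p) UNIV"
    if "p \<in> ball (x, a) r" for p
  proof -
    have "(\<lambda>(\<alpha>, \<beta>). c (\<alpha>, \<beta>) * (\<Prod>i\<in>UNIV. (fst p $ i - x $ i) ^ \<alpha> i)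
                        * (\<Prod>i\<in>UNIV. (snd p $ i - a $ i) ^ \<beta> i))
          = (\<lambda>q. c q * multi_monomial q (fst p - x) (snd p - a))"
      by (auto simp: multi_monomial_def mult.assoc)
    then show ?thesis using bspec[OF raw that] by simp
  qed
  define L where "L = (\<chi> i. \<Sum>q | multi_degree q = 1. c q * of_nat (fst q i))"
  show ?thesis
  proof (rule that)
    fix w
    obtain \<rho> where "\<rho> > 0" and in_ball: "\<And>t. norm t < \<rho> \<Longrightarrow> (x + t *s w, a) \<in> ball (x, a) r"
      using line_near_0_in_open[of "ball (x, a) r" x a w] \<open>r > 0\<close> by auto
    define b where "b k = (\<Sum>q | multi_degree q = k. c q * multi_monomial q w 0)" for k
    have "(\<lambda>k. b k * t ^ k) sums f (x + t *s w, a)" if "norm t < \<rho>" for t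
    proof -
      have "((\<lambda>q. t ^ multi_degree q * (c q * multi_monomial q w 0)) has_sum f (x + t *s w, a)) UNIV"
        using series[OF in_ball[OF that]] multi_monomial_scale[of _ t w 0] by (simp add: mult_ac)
      then show ?thesis
        unfolding b_def by (rule has_sum_graded_imp_sums[OF finite_multi_degree_eq])
    qed
    moreover have "b 1 = pairing w L"
    proof -
      have "b 1 = (\<Sum>q | multi_degree q = 1. \<Sum>i\<in>UNIV. w$i * (c q * of_nat (fst q i)))"
        unfolding b_def by (intro sum.cong refl) (simp add: multi_monomial_degree_one sum_distrib_left mult_ac)
      also have "\<dots> = pairing w L"
        unfolding pairing_def L_def by (subst sum.swap) (simp add: sum_distrib_left)
      finally show ?thesis .
    qed
    ultimately show "\<exists>\<rho>>0. \<exists>b. (\<forall>t. norm t < \<rho> \<longrightarrow> (\<lambda>k. b k * t ^ k) sums f (x + t *s w, a))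
                             \<and> b 1 = pairing w L"
      using \<open>\<rho> > 0\<close> by blast
  qed
qed

lemma pairing_axis: "pairing (axis i 1) L = L $ i"
proof -
  have "pairing (axis i 1) L = (\<Sum>j\<in>UNIV. if j = i then L $ j else 0)"
    unfolding pairing_def by (rule sum.cong) (auto simp: axis_def)
  then show ?thesis by simp
qed

lemma locally_analytic_on_line_has_field_derivative:
  fixes f :: "(complex^'n) \<times> (complex^'n) \<Rightarrow> complex"
  assumes "locally_analytic_on f U" "(x, a) \<in> U"
  shows "\<exists>\<rho>>0. ((\<lambda>t. f (x + t *s w, a)) has_field_derivative pairing w (dx f x a)) (at 0)
                \<and> continuous_on (ball 0 \<rho>) (\<lambda>t. f (x + t *s w, a))"
proof -
  obtain L where L: "\<And>w. \<exists>\<rho>>0. \<exists>b. (\<forall>t. norm t < \<rho> \<longrightarrow> (\<lambda>k. b k * t ^ k) sums f (x + t *s w, a))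
                                   \<and> b 1 = pairing w L"
    using locally_analytic_on_line_sums[OF assms] by blast
  have line: "\<exists>\<rho>>0. ((\<lambda>t. f (x + t *s w, a)) has_field_derivative pairing w L) (at 0)
                   \<and> continuous_on (ball 0 \<rho>) (\<lambda>t. f (x + t *s w, a))" for w
  proof -
    obtain \<rho> b where "\<rho> > 0" and series: "\<And>t. norm t < \<rho> \<Longrightarrow> (\<lambda>k. b k * t ^ k) sums f (x + t *s w, a)"
      and "b 1 = pairing w L"
      using L[of w] by blast
    then show ?thesis
      using power_series_derivative_at_0_and_continuity[OF \<open>\<rho> > 0\<close> series] by auto
  qed
  have "dx f x a $ i = L $ i" for i
    using line[of "axis i 1"] DERIV_imp_deriv by (fastforce simp: dx_def pairing_axis)
  then have "dx f x a = L" by (simp add: vec_eq_iff)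
  then show ?thesis using line by simp
qed

lemma eigenvalue_branch_affine_on_line:
  fixes f :: "(complex^'n) \<times> (complex^'n) \<Rightarrow> complex"
  assumes "open U" "(x, a) \<in> U"
    and eig: "\<And>x a. (x, a) \<in> U \<Longrightarrow> pencil_eigenvalue br x a (f (x, a))"
    and "\<rho> > 0" and cont: "continuous_on (ball 0 \<rho>) (\<lambda>t. f (x + t *s (\<alpha> *s x + \<beta> *s a), a))"
  obtains \<delta> where "\<delta> > 0"
    "\<And>t::complex. t \<in> ball 0 \<delta> \<Longrightarrow> f (x + t *s (\<alpha> *s x + \<beta> *s a), a) = (1 + t * \<alpha>) * f (x, a) + t * \<beta>"
proof -
  define g where "g t = f (x + t *s (\<alpha> *s x + \<beta> *s a), a)" for t :: complex
  obtain \<rho>' where "\<rho>' > 0" and in_U: "\<And>t. norm t < \<rho>' \<Longrightarrow> (x + t *s (\<alpha> *s x + \<beta> *s a), a) \<in> U"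
    using line_near_0_in_open[OF assms(1,2)] by blast
  define \<delta> where "\<delta> = min (min \<rho> \<rho>') (1 / (norm \<alpha> + 1))"
  have "\<delta> > 0" using \<open>\<rho> > 0\<close> \<open>\<rho>' > 0\<close> by (simp add: \<delta>_def add_nonneg_pos)
  have nonzero: "1 + t * \<alpha> \<noteq> 0" if "t \<in> ball 0 \<delta>" for t :: complex
  proof -
    have "norm (t * \<alpha>) \<le> norm t * (norm \<alpha> + 1)" by (simp add: norm_mult mult_left_mono)
    also have "\<dots> < 1" using that by (simp add: \<delta>_def field_simps add_pos_nonneg)
    finally show ?thesis by (metis add.commute add_eq_0_iff norm_minus_cancel norm_one less_irrefl)
  qed
  \<comment> \<open>h t is an eigenvalue at (x, a), so h is continuous with finite range, hence constant.\<close>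
  define h where "h t = (g t - t * \<beta>) / (1 + t * \<alpha>)" for t
  have "h ` ball 0 \<delta> \<subseteq> {l. pencil_eigenvalue br x a l}"
  proof clarify
    fix t :: complex assume t: "t \<in> ball 0 \<delta>"
    have line: "x + t *s (\<alpha> *s x + \<beta> *s a) = (1 + t * \<alpha>) *s x + (t * \<beta>) *s a"
      by (simp add: vec_eq_iff algebra_simps)
    have "(x + t *s (\<alpha> *s x + \<beta> *s a), a) \<in> U"
      using t in_U by (simp add: \<delta>_def)
    then have "pencil_eigenvalue br ((1 + t * \<alpha>) *s x + (t * \<beta>) *s a) a (g t)"
      unfolding g_def line by (rule eig)
    then show "pencil_eigenvalue br x a (h t)"
      unfolding h_def pencil_eigenvalue_affine[OF nonzero[OF t]] .
  qed
  then have "finite (h ` ball 0 \<delta>)"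
    using finite_pencil_eigenvalues finite_subset by blast
  moreover have "continuous_on (ball 0 \<delta>) h"
    unfolding h_def g_def using nonzero
    by (intro continuous_intros continuous_on_subset[OF cont]) (auto simp: \<delta>_def)
  ultimately have "h constant_on ball 0 \<delta>"
    by (intro continuous_finite_range_constant) auto
  have "g t = (1 + t * \<alpha>) * f (x, a) + t * \<beta>" if "t \<in> ball 0 \<delta>" for t
  proof -
    have "h t = h 0"
      using \<open>h constant_on ball 0 \<delta>\<close> that \<open>\<delta> > 0\<close> unfolding constant_on_def by (metis centre_in_ball)
    then have "g t - t * \<beta> = f (x, a) * (1 + t * \<alpha>)"
      using nonzero[OF that] by (simp add: h_def g_def divide_eq_eq)
    then show ?thesis by (simp add: diff_eq_eq mult.commute)
  qed
  then show ?thesis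
    using that[OF \<open>\<delta> > 0\<close>] by (simp add: g_def)
qed

lemma pairing_dx_of_eigenvalue_branch:
  fixes f :: "(complex^'n) \<times> (complex^'n) \<Rightarrow> complex"
  assumes "locally_analytic_on f U" "open U" "(x, a) \<in> U"
    and "\<And>x a. (x, a) \<in> U \<Longrightarrow> pencil_eigenvalue br x a (f (x, a))"
  shows "pairing (\<alpha> *s x + \<beta> *s a) (dx f x a) = \<alpha> * f (x, a) + \<beta>"
proof -
  obtain \<rho> where "\<rho> > 0"
    and deriv: "((\<lambda>t. f (x + t *s (\<alpha> *s x + \<beta> *s a), a)) has_field_derivative
                   pairing (\<alpha> *s x + \<beta> *s a) (dx f x a)) (at 0)"
    and cont: "continuous_on (ball 0 \<rho>) (\<lambda>t. f (x + t *s (\<alpha> *s x + \<beta> *s a), a))"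
    using locally_analytic_on_line_has_field_derivative[OF assms(1,3)] by blast
  obtain \<delta> where "\<delta> > 0" and affine:
    "\<And>t::complex. t \<in> ball 0 \<delta> \<Longrightarrow> f (x + t *s (\<alpha> *s x + \<beta> *s a), a) = (1 + t * \<alpha>) * f (x, a) + t * \<beta>"
    using eigenvalue_branch_affine_on_line[OF assms(2,3,4) \<open>\<rho> > 0\<close> cont] by blast
  have "((\<lambda>t. (1 + t * \<alpha>) * f (x, a) + t * \<beta>) has_field_derivative \<alpha> * f (x, a) + \<beta>) (at 0)"
    by (auto intro!: derivative_eq_intros)
  then have "((\<lambda>t. f (x + t *s (\<alpha> *s x + \<beta> *s a), a)) has_field_derivative \<alpha> * f (x, a) + \<beta>) (at 0)"
    by (rule has_field_derivative_transform_within_open[of _ _ _ "ball 0 \<delta>"])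
      (use \<open>\<delta> > 0\<close> affine in auto)
  then show ?thesis using deriv DERIV_unique by blast
qed

lemma pairing_mult_commute_if_wedge2_eq_0:
  assumes "wedge2 u v = 0"
  shows "pairing x u * pairing a v = pairing a u * pairing x v"
proof -
  have swap: "u$i * v$j = u$j * v$i" for i j
    using arg_cong[OF assms, of "\<lambda>w. w $ (i, j)"] by (simp add: wedge2_def)
  have "pairing x u * pairing a v = (\<Sum>i\<in>UNIV. \<Sum>j\<in>UNIV. x$i * a$j * (u$i * v$j))"
    unfolding pairing_def sum_product by (simp add: mult_ac)
  also have "\<dots> = (\<Sum>i\<in>UNIV. \<Sum>j\<in>UNIV. x$i * a$j * (u$j * v$i))"
    by (simp only: swap)
  also have "\<dots> = pairing a u * pairing x v"
    unfolding pairing_def sum_product by (subst sum.swap) (simp add: mult_ac)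
  finally show ?thesis .
qed

theorem lemma4:
  fixes br :: "complex^'n \<Rightarrow> complex^'n \<Rightarrow> complex^'n"
    and U :: "((complex^'n) \<times> (complex^'n)) set"
    and lam1 lam2 :: "(complex^'n) \<times> (complex^'n) \<Rightarrow> complex"
  assumes "lie_algebra br"
    and "open U"
    and "locally_analytic_on lam1 U"
    and "locally_analytic_on lam2 U"
    and "\<forall>(x, a)\<in>U. pencil_eigenvalue br x a (lam1 (x, a)) \<and> pencil_eigenvalue br x a (lam2 (x, a))
                     \<and> lam1 (x, a) \<noteq> lam2 (x, a)"
  shows "\<exists>V. open V \<and> V \<subseteq> U \<and> U \<subseteq> closure V \<and>
             (\<forall>(x0, a0)\<in>V. wedge2 (dx lam1 x0 a0) (dx lam2 x0 a0) \<noteq> 0)"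
proof (intro exI conjI)
  show "open U" "U \<subseteq> U" "U \<subseteq> closure U" using assms(2) closure_subset by auto
  show "\<forall>(x, a)\<in>U. wedge2 (dx lam1 x a) (dx lam2 x a) \<noteq> 0"
  proof clarify
    fix x a assume "(x, a) \<in> U" and "wedge2 (dx lam1 x a) (dx lam2 x a) = 0"
    have "pairing (\<alpha> *s x + \<beta> *s a) (dx lam1 x a) = \<alpha> * lam1 (x, a) + \<beta>"
      "pairing (\<alpha> *s x + \<beta> *s a) (dx lam2 x a) = \<alpha> * lam2 (x, a) + \<beta>" for \<alpha> \<beta>
      using pairing_dx_of_eigenvalue_branch[OF _ assms(2) \<open>(x, a) \<in> U\<close>] assms(3-5) by fast+
    from this[of 1 0] this[of 0 1]
    have "pairing x (dx lam1 x a) = lam1 (x, a)" "pairing a (dx lam1 x a) = 1"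
      "pairing x (dx lam2 x a) = lam2 (x, a)" "pairing a (dx lam2 x a) = 1"
      by simp_all
    then show False
      using pairing_mult_commute_if_wedge2_eq_0[OF \<open>wedge2 _ _ = 0\<close>, of x a]
        assms(5) \<open>(x, a) \<in> U\<close> by auto
  qed
qed

end
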